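(* Let $n\in\mathbb{N}$ and let $K\subset\mathbb{R}^n$ be a strictly convex convex body (not necessarily $0$-symmetric). Then \[ G(K)\le 2\bigl(2^{n-1}-1\bigr)\left\lceil \tfrac{2}{3}\bigl(G(\operatorname{int}K)+1\bigr)\right\rceil + G(\operatorname{int}K)+2. \]
   Context: A convex body in $\mathbb{R}^n$ is a compact convex set with nonempty interior. It is strictly convex if its boundary contains no nondegenerate line segment. For $S\subset\mathbb{R}^n$, $G(S)=|S\cap\mathbb{Z}^n|$, and $\operatorname{int}K$ denotes the interior of $K$. $\lceil x\rceil$ is the smallest integer $\ge x$. *)

theory Defs
  imports "HOL-Analysis.Analysis"
begin

definition convex_body :: "(real ^ 'n) set \<Rightarrow> bool" where
  "convex_body K \<longleftrightarrow> compact K \<and> convex K \<and> interior K \<noteq> {}"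

definition strictly_convex_body :: "(real ^ 'n) set \<Rightarrow> bool" where
  "strictly_convex_body K \<longleftrightarrow> convex_body K \<and>
     (\<forall>x y. x \<noteq> y \<longrightarrow> \<not> closed_segment x y \<subseteq> frontier K)"

definition lattice_points :: "(real ^ 'n) set" where
  "lattice_points = {x. \<forall>i. x $ i \<in> \<int>}"

definition G :: "(real ^ 'n) set \<Rightarrow> nat" where
  "G S = card (S \<inter> lattice_points)"

end

theory Submission
  imports Defs "HOL-Library.Cardinality"
begin

text \<open>Sort the lattice points of \<open>K\<close> into the \<open>2\<^sup>n\<close> classes of coordinate parities. The midpoint
  of two distinct points of one class is again a lattice point, and by strict convexity it lies in
  the interior of \<open>K\<close>. Projecting a class injectively to the line by a generic linear functional,
  and using that \<open>m\<close> reals have at least \<open>2m - 3\<close> distinct midpoints, every class has at most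
  \<open>(G(int K) + 3)/2\<close> points. The class of the interior lattice point minimising the functional
  has at most \<open>(G(int K) + 2)/2\<close>, since that point is an interior lattice point that is no midpoint.
  Summing over the classes gives the bound.\<close>

lemma midpoint_in_interior_convex:
  fixes K :: "'a::euclidean_space set"
  assumes K: "convex K" and xy: "x \<in> K" "y \<in> K" "x \<noteq> y"
    and not_frontier: "\<not> closed_segment x y \<subseteq> frontier K"
  shows "midpoint x y \<in> interior K"
proof -
  obtain w where w: "w \<in> closed_segment x y" "w \<notin> frontier K"
    using not_frontier by blast
  have "w \<in> K"
    using w(1) K xy closed_segment_subset by blast
  then have w_interior: "w \<in> interior K"
    using w(2) closure_subset by (auto simp: frontier_def)
  have towards: "midpoint x y \<in> interior K"
    if "midpoint x y \<in> closed_segment w z" "z \<in> K" "midpoint x y \<noteq> z" for z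
  proof (cases "midpoint x y = w")
    case False
    then have "midpoint x y \<in> open_segment w z"
      using that by (simp add: open_segment_def)
    then show ?thesis
      using in_interior_closure_convex_segment[OF K w_interior] that(2) closure_subset by blast
  qed (use w_interior in simp)
  have "midpoint x y \<in> closed_segment w x \<union> closed_segment w y"
    using Un_closed_segment[OF w(1)] by (simp add: closed_segment_commute)
  then show ?thesis
    using towards xy by auto
qed

definition parity :: "real ^ 'n \<Rightarrow> 'n \<Rightarrow> bool" where
  "parity x = (\<lambda>i. even \<lfloor>x $ i\<rfloor>)"

lemma midpoint_in_lattice_points:
  assumes "x \<in> lattice_points" "y \<in> lattice_points" "parity x = parity y"
  shows "midpoint x y \<in> lattice_points"
  unfolding lattice_points_def
proof (intro CollectI allI)
  fix i
  have "x $ i \<in> \<int>" "y $ i \<in> \<int>"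
    using assms(1,2) by (auto simp: lattice_points_def)
  then obtain a b where ab: "x $ i = of_int a" "y $ i = of_int b"
    by (metis Ints_cases)
  have "parity x i = parity y i"
    using assms(3) by simp
  then have "even a = even b"
    using ab by (simp add: parity_def)
  then obtain c where "a + b = 2 * c"
    by (metis evenE even_add)
  then have "midpoint x y $ i = of_int c"
    using ab by (simp add: midpoint_def field_simps)
  then show "midpoint x y $ i \<in> \<int>"
    by simp
qed

lemma finite_lattice_points_bounded:
  fixes K :: "(real ^ 'n) set"
  assumes "bounded K"
  shows "finite (K \<inter> lattice_points)"
proof -
  obtain B where B: "\<And>x. x \<in> K \<Longrightarrow> norm x \<le> B"
    using assms by (auto simp: bounded_iff)
  define floors :: "real ^ 'n \<Rightarrow> 'n \<Rightarrow> int" where "floors x = (\<lambda>i. \<lfloor>x $ i\<rfloor>)" for x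
  have "inj_on floors (K \<inter> lattice_points)"
    by (rule inj_onI) (metis floors_def lattice_points_def IntD2 mem_Collect_eq of_int_floor vec_eq_iff)
  moreover have "floors x i \<in> {-\<lceil>B\<rceil>..\<lceil>B\<rceil>}" if "x \<in> K" for x i
  proof -
    have "\<bar>x $ i\<bar> \<le> B"
      using B that component_le_norm_cart order_trans by blast
    then show ?thesis
      unfolding floors_def by (simp add: abs_le_iff) linarith
  qed
  then have "floors ` (K \<inter> lattice_points) \<subseteq> Pi\<^sub>E UNIV (\<lambda>_. {-\<lceil>B\<rceil>..\<lceil>B\<rceil>})"
    by auto
  then have "finite (floors ` (K \<inter> lattice_points))"
    by (rule finite_subset) (intro finite_PiE; simp)
  ultimately show ?thesis
    using finite_imageD by blast
qed

lemma exists_inner_nonzero: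
  fixes D :: "'a::real_inner set"
  assumes "finite D" "0 \<notin> D"
  shows "\<exists>v. \<forall>d\<in>D. v \<bullet> d \<noteq> 0"
  using assms
proof (induction D)
  case empty
  then show ?case by simp
next
  case (insert d D)
  then obtain v where v: "\<forall>e\<in>D. v \<bullet> e \<noteq> 0" by auto
  have "finite ((\<lambda>e. - (v \<bullet> e) / (d \<bullet> e)) ` insert d D)"
    using insert.hyps(1) by simp
  then obtain t :: real where t: "t \<notin> (\<lambda>e. - (v \<bullet> e) / (d \<bullet> e)) ` insert d D"
    using ex_new_if_finite[OF infinite_UNIV_char_0] by blast
  have "(v + t *\<^sub>R d) \<bullet> e \<noteq> 0" if e: "e \<in> insert d D" for e
  proof (cases "d \<bullet> e = 0")
    case True
    then have "e \<noteq> d"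
      using insert.prems by auto
    then have "v \<bullet> e \<noteq> 0"
      using v e by auto
    then show ?thesis
      using True by (simp add: inner_add_left)
  next
    case False
    show ?thesis
    proof
      assume "(v + t *\<^sub>R d) \<bullet> e = 0"
      then have "t * (d \<bullet> e) = - (v \<bullet> e)"
        by (simp add: inner_add_left add_eq_0_iff2)
      then have "t = - (v \<bullet> e) / (d \<bullet> e)"
        using False by (metis nonzero_mult_div_cancel_right)
      then show False
        using t e by blast
    qed
  qed
  then show ?case by blast
qed

lemma exists_inner_inj_on:
  fixes S :: "'a::real_inner set"
  assumes "finite S"
  shows "\<exists>v. inj_on (inner v) S"
proof -
  obtain v where v: "\<forall>d\<in>(\<lambda>(x, y). x - y) ` (S \<times> S) - {0}. v \<bullet> d \<noteq> 0"
    using exists_inner_nonzero[of "(\<lambda>(x, y). x - y) ` (S \<times> S) - {0}"] assms by blast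
  have "inj_on (inner v) S"
  proof (rule inj_onI)
    fix x y assume "x \<in> S" "y \<in> S" "v \<bullet> x = v \<bullet> y"
    then show "x = y"
      using v by (force simp: inner_diff_right)
  qed
  then show ?thesis ..
qed

definition midpoints :: "'a::linordered_field set \<Rightarrow> 'a set" where
  "midpoints A = {(s + t) / 2 | s t. s \<in> A \<and> t \<in> A \<and> s < t}"

lemma finite_midpoints: "finite A \<Longrightarrow> finite (midpoints A)"
  by (rule finite_subset[of _ "\<Union>s\<in>A. (\<lambda>t. (s + t) / 2) ` A"]) (auto simp: midpoints_def)

lemma Min_notin_midpoints:
  fixes A :: "'a::linordered_field set"
  assumes "finite A"
  shows "Min A \<notin> midpoints A"
proof
  assume "Min A \<in> midpoints A"
  then obtain s t where "s \<in> A" "s < t" "Min A = (s + t) / 2"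
    by (auto simp: midpoints_def)
  moreover have "Min A \<le> s"
    using assms \<open>s \<in> A\<close> by simp
  ultimately show False
    using less_half_sum[of s t] by simp
qed

lemma card_midpoints_ge:
  fixes A :: "'a::linordered_field set"
  assumes A: "finite A"
  shows "2 * card A \<le> card (midpoints A) + 3"
proof (cases "A = {}")
  case False
  define a b where "a = Min A" and "b = Max A"
  have ab: "a \<in> A" "b \<in> A" "\<And>x. x \<in> A \<Longrightarrow> a \<le> x \<and> x \<le> b"
    using A False by (auto simp: a_def b_def)
  define L R where "L = (\<lambda>x. (a + x) / 2) ` (A - {a})" and "R = (\<lambda>x. (x + b) / 2) ` (A - {b})"
  have "(s + t) / 2 \<in> midpoints A" if "s \<in> A" "t \<in> A" "s \<le> t" "s \<noteq> t" for s t
    using that unfolding midpoints_def by force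
  then have "L \<union> R \<subseteq> midpoints A"
    using ab by (auto simp: L_def R_def)
  then have "card (L \<union> R) \<le> card (midpoints A)"
    by (intro card_mono finite_midpoints A)
  have "L \<inter> R \<subseteq> {(a + b) / 2}"
  proof
    fix z assume "z \<in> L \<inter> R"
    then obtain x y where xy: "x \<in> A" "y \<in> A" "z = (a + x) / 2" "z = (y + b) / 2"
      unfolding L_def R_def by blast
    then have "a + x = y + b"
      by simp
    then have "x = b"
      using ab(3)[OF xy(1)] ab(3)[OF xy(2)] by linarith
    then show "z \<in> {(a + b) / 2}"
      using xy by simp
  qed
  then have "card (L \<inter> R) \<le> 1"
    using card_mono[of "{(a + b) / 2}" "L \<inter> R"] by simp
  moreover have "card L + card R = card (L \<union> R) + card (L \<inter> R)"
    using A by (intro card_Un_Int) (simp_all add: L_def R_def)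
  moreover have "card L = card A - 1" "card R = card A - 1"
    using A ab by (simp_all add: L_def R_def card_image inj_on_def)
  moreover have "card A \<ge> 1"
    using A False by (simp add: Suc_le_eq card_gt_0_iff)
  ultimately show ?thesis
    using \<open>card (L \<union> R) \<le> card (midpoints A)\<close> by linarith
qed simp

definition parity_class :: "(real ^ 'n) set \<Rightarrow> ('n \<Rightarrow> bool) \<Rightarrow> (real ^ 'n) set" where
  "parity_class K c = {x \<in> K \<inter> lattice_points. parity x = c}"

lemma parity_class_subset: "parity_class K c \<subseteq> K \<inter> lattice_points"
  by (auto simp: parity_class_def)

lemma finite_lattice_points_strictly_convex_body:
  fixes K :: "(real ^ 'n) set"
  assumes "strictly_convex_body K"
  shows "finite (K \<inter> lattice_points)" "finite (interior K \<inter> lattice_points)"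
proof -
  show "finite (K \<inter> lattice_points)"
    using assms compact_imp_bounded finite_lattice_points_bounded
    by (auto simp: strictly_convex_body_def convex_body_def)
  then show "finite (interior K \<inter> lattice_points)"
    by (rule finite_subset[rotated]) (use interior_subset in blast)
qed

lemma midpoint_parity_class:
  fixes K :: "(real ^ 'n) set"
  assumes "strictly_convex_body K" "x \<in> parity_class K c" "y \<in> parity_class K c" "x \<noteq> y"
  shows "midpoint x y \<in> interior K \<inter> lattice_points"
  using assms midpoint_in_interior_convex[of K x y] midpoint_in_lattice_points[of x y]
  by (auto simp: strictly_convex_body_def convex_body_def parity_class_def)

lemma inner_midpoint: "v \<bullet> midpoint x y = (v \<bullet> x + v \<bullet> y) / 2"
  by (simp add: midpoint_def inner_add_right field_simps)

lemma midpoints_inner_parity_class: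
  fixes K :: "(real ^ 'n) set"
  assumes "strictly_convex_body K"
  shows "midpoints (inner v ` parity_class K c) \<subseteq> inner v ` (interior K \<inter> lattice_points)"
proof
  fix z assume "z \<in> midpoints (inner v ` parity_class K c)"
  then obtain x y where xy: "x \<in> parity_class K c" "y \<in> parity_class K c"
      "v \<bullet> x < v \<bullet> y" "z = (v \<bullet> x + v \<bullet> y) / 2"
    by (auto simp: midpoints_def)
  then have "midpoint x y \<in> interior K \<inter> lattice_points"
    using midpoint_parity_class[OF assms] by blast
  then show "z \<in> inner v ` (interior K \<inter> lattice_points)"
    using xy(4) inner_midpoint[of v x y] by (metis image_eqI)
qed

lemma card_parity_class_le:
  fixes K :: "(real ^ 'n) set"
  assumes K: "strictly_convex_body K"
  shows "2 * card (parity_class K c) \<le> G (interior K) + 3"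
proof -
  have fin: "finite (parity_class K c)"
    using finite_lattice_points_strictly_convex_body(1)[OF K] parity_class_subset by (rule finite_subset[rotated])
  obtain v where inj: "inj_on (inner v) (parity_class K c)"
    using exists_inner_inj_on[OF fin] by blast
  have "2 * card (parity_class K c) = 2 * card (inner v ` parity_class K c)"
    using inj by (simp add: card_image)
  also have "\<dots> \<le> card (midpoints (inner v ` parity_class K c)) + 3"
    using fin by (intro card_midpoints_ge finite_imageI)
  also have "card (midpoints (inner v ` parity_class K c)) \<le> card (inner v ` (interior K \<inter> lattice_points))"
    using finite_lattice_points_strictly_convex_body(2)[OF K]
    by (intro card_mono finite_imageI midpoints_inner_parity_class K)
  also have "\<dots> \<le> G (interior K)"
    unfolding G_def by (rule card_image_le) (rule finite_lattice_points_strictly_convex_body(2)[OF K])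
  finally show ?thesis by simp
qed

lemma exists_small_parity_class:
  fixes K :: "(real ^ 'n) set"
  assumes K: "strictly_convex_body K"
  shows "\<exists>c. 2 * card (parity_class K c) \<le> G (interior K) + 2"
proof (cases "interior K \<inter> lattice_points = {}")
  case True
  then have le3: "2 * card (parity_class K c) \<le> 3" for c
    using card_parity_class_le[OF K, of c] by (simp add: G_def)
  have "2 * card (parity_class K c) \<le> 2" for c
    using le3[of c] by presburger
  then show ?thesis
    by (meson le_add2 order_trans)
next
  case False
  let ?I = "interior K \<inter> lattice_points"
  have finI: "finite ?I"
    using finite_lattice_points_strictly_convex_body(2)[OF K] .
  obtain v where inj: "inj_on (inner v) (K \<inter> lattice_points)"
    using exists_inner_inj_on finite_lattice_points_strictly_convex_body(1)[OF K] by blast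
  have "Min (inner v ` ?I) \<in> inner v ` ?I"
    using finI False by (intro Min_in) auto
  then obtain p where p: "p \<in> ?I" "v \<bullet> p = Min (inner v ` ?I)"
    by (metis imageE)
  define C where "C = parity_class K (parity p)"
  have C_sub: "C \<subseteq> K \<inter> lattice_points"
    unfolding C_def by (rule parity_class_subset)
  then have finC: "finite C"
    using finite_lattice_points_strictly_convex_body(1)[OF K] by (rule finite_subset)
  have pC: "p \<in> C"
    using p(1) interior_subset by (auto simp: C_def parity_class_def)
  \<comment> \<open>Midpoints with \<open>p\<close> stay in \<open>?I\<close>, so \<open>p\<close> minimises \<open>inner v\<close> on its whole parity class.\<close>
  have "v \<bullet> p \<le> v \<bullet> z" if "z \<in> C" for z
  proof (cases "z = p")
    case False
    then have "midpoint z p \<in> ?I"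
      using midpoint_parity_class[OF K] that pC by (auto simp: C_def)
    then have "v \<bullet> p \<le> v \<bullet> midpoint z p"
      using p(2) finI by simp
    then show ?thesis
      by (simp add: inner_midpoint)
  qed simp
  then have "Min (inner v ` C) = v \<bullet> p"
    using finC pC by (intro Min_eqI) auto
  then have "v \<bullet> p \<notin> midpoints (inner v ` C)"
    using Min_notin_midpoints[of "inner v ` C"] finC by simp
  moreover have "insert (v \<bullet> p) (midpoints (inner v ` C)) \<subseteq> inner v ` ?I"
    using p(1) midpoints_inner_parity_class[OF K] by (auto simp: C_def)
  ultimately have "card (midpoints (inner v ` C)) + 1 \<le> card (inner v ` ?I)"
    using card_mono[OF finite_imageI[OF finI]] finite_midpoints[OF finite_imageI[OF finC]]
    by (metis Suc_eq_plus1 card_insert_disjoint)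
  also have "\<dots> \<le> G (interior K)"
    unfolding G_def by (rule card_image_le[OF finI])
  finally have "2 * card (inner v ` C) \<le> G (interior K) + 2"
    using card_midpoints_ge[of "inner v ` C"] finC by simp
  moreover have "card (inner v ` C) = card C"
    using inj_on_subset[OF inj C_sub] by (simp add: card_image)
  ultimately show ?thesis
    unfolding C_def by auto
qed

lemma exists_two_small_parity_classes:
  fixes K :: "(real ^ 'n) set"
  assumes K: "strictly_convex_body K"
  obtains c c' where "c \<noteq> c'"
    "real (card (parity_class K c)) + real (card (parity_class K c')) \<le> real (G (interior K)) + 2"
proof -
  obtain c where c: "2 * card (parity_class K c) \<le> G (interior K) + 2"
    using exists_small_parity_class[OF K] by blast
  have "c \<noteq> Not \<circ> c"
    by (auto simp: fun_eq_iff)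
  moreover have "card (parity_class K c) + card (parity_class K (Not \<circ> c)) \<le> G (interior K) + 2"
    using c card_parity_class_le[OF K, of "Not \<circ> c"] by linarith
  then have "real (card (parity_class K c)) + real (card (parity_class K (Not \<circ> c)))
      \<le> real (G (interior K)) + 2"
    by (metis of_nat_add of_nat_le_iff of_nat_numeral)
  ultimately show ?thesis
    using that by blast
qed

lemma G_eq_sum_parity_classes:
  fixes K :: "(real ^ 'n) set"
  assumes "finite (K \<inter> lattice_points)"
  shows "G K = (\<Sum>c\<in>UNIV. card (parity_class K c))"
proof -
  have "G K = (\<Sum>x\<in>K \<inter> lattice_points. 1)"
    by (simp add: G_def)
  also have "\<dots> = (\<Sum>c\<in>UNIV. \<Sum>x\<in>{x \<in> K \<inter> lattice_points. parity x = c}. 1)"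
    by (rule sum.group[symmetric]) (simp_all add: assms)
  finally show ?thesis
    by (simp add: parity_class_def)
qed

lemma real_card_parities_minus_two:
  "real (CARD('n::finite \<Rightarrow> bool) - 2) = 2 * (2 ^ (CARD('n) - 1) - 1)"
proof -
  have "(2::nat) \<le> 2 ^ CARD('n)"
    using power_increasing[of 1 "CARD('n)" "2::nat"] by simp
  then have "real (CARD('n \<Rightarrow> bool) - 2) = 2 ^ CARD('n) - 2"
    by (simp add: card_fun of_nat_diff)
  also have "\<dots> = 2 * (2 ^ (CARD('n) - 1) - 1)"
    using power_Suc[of "2::real" "CARD('n) - 1"] by simp
  finally show ?thesis .
qed

lemma sum_le_two_terms_plus_bound:
  fixes h :: "'a \<Rightarrow> 'b::{ordered_comm_monoid_add, semiring_1}"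
  assumes "finite U" "i \<in> U" "j \<in> U" "i \<noteq> j" "\<And>k. k \<in> U \<Longrightarrow> h k \<le> b"
  shows "sum h U \<le> h i + h j + of_nat (card U - 2) * b"
proof -
  have "sum h U = h i + sum h (U - {i})"
    using assms(1,2) by (rule sum.remove)
  also have "sum h (U - {i}) = h j + sum h (U - {i} - {j})"
    using assms(1,3,4) by (intro sum.remove) auto
  also have "sum h (U - {i} - {j}) \<le> of_nat (card (U - {i} - {j})) * b"
    using assms(5) by (intro sum_bounded_above) auto
  also have "card (U - {i} - {j}) = card U - 2"
    using assms(2-4) by (simp add: card_Diff_singleton_if)
  finally show ?thesis
    by (simp add: add.assoc add_left_mono)
qed

lemma le_ceiling_two_thirds:
  assumes "2 * k \<le> g + 3"
  shows "real k \<le> real_of_int \<lceil>(2/3) * (real g + 1)\<rceil>"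
proof -
  have "2 * real k \<le> real g + 3"
    using of_nat_le_iff[where 'a=real, THEN iffD2, OF assms] by simp
  then have "real_of_int (int k) - 1 < (2/3) * (real g + 1)"
    by simp
  then have "int k \<le> \<lceil>(2/3) * (real g + 1)\<rceil>"
    by (simp only: le_ceiling_iff)
  then show ?thesis
    using of_int_le_iff[where 'a=real, THEN iffD2] by fastforce
qed

theorem theorem1p2:
  fixes K :: "(real ^ 'n) set"
  assumes "strictly_convex_body K"
  shows "real (G K) \<le> 2 * (2 ^ (CARD('n) - 1) - 1)
           * real_of_int \<lceil>(2/3) * (real (G (interior K)) + 1)\<rceil>
         + real (G (interior K)) + 2"
proof -
  let ?C = "parity_class K" and ?g = "G (interior K)"
  let ?b = "real_of_int \<lceil>(2/3) * (real ?g + 1)\<rceil>"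
  obtain c c' where cc: "c \<noteq> c'" "real (card (?C c)) + real (card (?C c')) \<le> real ?g + 2"
    using exists_two_small_parity_classes[OF assms] .
  have "real (G K) = (\<Sum>d\<in>UNIV. real (card (?C d)))"
    by (simp add: G_eq_sum_parity_classes[OF finite_lattice_points_strictly_convex_body(1)[OF assms]])
  also have "\<dots> \<le> real (card (?C c)) + real (card (?C c')) + real (CARD('n \<Rightarrow> bool) - 2) * ?b"
    using cc(1) le_ceiling_two_thirds card_parity_class_le[OF assms]
    by (intro sum_le_two_terms_plus_bound) auto
  also have "\<dots> \<le> real ?g + 2 + 2 * (2 ^ (CARD('n) - 1) - 1) * ?b"
    using cc(2) by (simp add: real_card_parities_minus_two)
  finally show ?thesis
    by simp
qed

end
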